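(* Let $p\in\mathbb{N}$ and let $X_1,\dots,X_n$ be i.i.d. random vectors in $[0,1]^p$ with density $f_X$ satisfying $0<c_X\le f_X\le C_X$. Let $\delta=\delta_n$ with $\delta^{-1}\in\mathbb{N}$, and suppose that for some integer $\nu\ge4$, $$\frac{(\log n)^5}{\delta^pn^{1-2/\nu}}\to0.$$ Let $p_\delta(x)=\mathbb{P}(X_1\in A_\delta(x))$ and $\hat p_\delta(x)=\frac1n\sum_{i=1}^n\mathbb{I}\{X_i\in A_\delta(x)\}$. Then $$\sup_{x\in[0,1]^p}\Big|\frac{\hat p_\delta(x)}{p_\delta(x)}-1\Big|=o_{\mathbb{P}}\big((\log n)^{-3/2}\big).$$
   Context: For $\delta^{-1}\in\mathbb{N}$, $[0,1]^p$ is partitioned by the equidistant grid of edge length $\delta$ into $\delta^{-p}$ hypercubes of volume $\delta^p$; $A_\delta(x)$ denotes the hypercube of this partition containing $x$. *)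

theory Defs
  imports "HOL-Probability.Probability"
begin

definition unit_cube :: "(real ^ 'p) set" where
  "unit_cube = {x. \<forall>j. 0 \<le> x $ j \<and> x $ j \<le> 1}"

text \<open>Grid with edge length delta = 1/m (m = delta^{-1} a positive natural number).
  Coordinate t in [0,1] lies in cell number min(floor(t*m), m-1), i.e. the cells are
  [k/m,(k+1)/m) for k < m-1 and the last one is [(m-1)/m, 1].\<close>
definition cell_index :: "nat \<Rightarrow> real \<Rightarrow> nat" where
  "cell_index m t = min (nat \<lfloor>t * real m\<rfloor>) (m - 1)"

definition grid_cell :: "nat \<Rightarrow> real ^ 'p \<Rightarrow> (real ^ 'p) set" where
  "grid_cell m x = {y \<in> unit_cube. \<forall>j. cell_index m (y $ j) = cell_index m (x $ j)}"

end

theory Submission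
  imports Defs "HOL-Real_Asymp.Real_Asymp"
begin

(* For a fixed grid cell C, the count of sample points in C is binomial with mean n p(C), where
   p(C) >= c_X delta^p.  The multiplicative Chernoff bound gives
   P(|p_hat(C)/p(C) - 1| > t) <= 2 exp(-n c_X delta^p t^2 / 4).  The supremum over x is a maximum
   over the at most delta^(-p) cells, so a union bound with t = eps (log n)^(-3/2) bounds the
   probability in question by 2 delta^(-p) exp(-c_X eps^2 n delta^p / (4 (log n)^3)).  Eventually
   n delta^p >= (log n)^5 and delta^(-p) <= n, so this is at most 2 n exp(-c_X eps^2 (log n)^2 / 4),
   which tends to 0. *)

section \<open>Chernoff bounds for sums of independent indicators\<close>

lemma exp_minus_le_quadratic:
  fixes x :: real
  assumes "0 \<le> x"
  shows "exp (- x) \<le> 1 - x + x\<^sup>2"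
proof -
  have "1 \<le> (1 + x) * (1 - x + x\<^sup>2)"
    using assms by (simp add: algebra_simps power2_eq_square power3_eq_cube)
  then have "1 / (1 + x) \<le> 1 - x + x\<^sup>2"
    using assms by (simp add: divide_le_eq mult.commute)
  moreover have "exp (- x) \<le> 1 / (1 + x)"
    using exp_ge_add_one_self[of x] assms by (simp add: exp_minus field_simps)
  ultimately show ?thesis by linarith
qed

lemma sum_indicator_eq_card_image:
  "finite I \<Longrightarrow> (\<Sum>i\<in>I. indicator C (X i) :: real) = real (card {i \<in> I. X i \<in> C})"
  by (simp add: indicator_def sum.If_cases Int_def)

lemma borel_measurable_card_mem:
  assumes "finite I" and "\<And>i. i \<in> I \<Longrightarrow> X i \<in> measurable M N" and "C \<in> sets N"
  shows "(\<lambda>\<omega>. real (card {i \<in> I. X i \<omega> \<in> C})) \<in> borel_measurable M"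
proof -
  have "(\<lambda>\<omega>. \<Sum>i\<in>I. indicator C (X i \<omega>) :: real) \<in> borel_measurable M"
    using assms(2,3) by (intro borel_measurable_sum) (simp add: measurable_compose[OF _ borel_measurable_indicator])
  then show ?thesis
    using assms(1) by (simp add: sum_indicator_eq_card_image cong: measurable_cong)
qed

context prob_space
begin

lemma expectation_exp_bernoulli_sum:
  fixes Y :: "'i \<Rightarrow> 'a \<Rightarrow> real" and q :: real
  assumes "finite I" and indep: "indep_vars (\<lambda>_. borel) Y I"
    and zero_one: "\<And>i \<omega>. i \<in> I \<Longrightarrow> \<omega> \<in> space M \<Longrightarrow> Y i \<omega> \<in> {0, 1}"
    and mean: "\<And>i. i \<in> I \<Longrightarrow> expectation (Y i) = q"
  shows "integrable M (\<lambda>\<omega>. exp (l * (\<Sum>i\<in>I. Y i \<omega>)))"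
    and "expectation (\<lambda>\<omega>. exp (l * (\<Sum>i\<in>I. Y i \<omega>))) = (1 + q * (exp l - 1)) ^ card I"
proof -
  have exp_sum: "exp (l * (\<Sum>i\<in>I. Y i \<omega>)) = (\<Prod>i\<in>I. exp (l * Y i \<omega>))" for \<omega>
    by (simp add: sum_distrib_left exp_sum \<open>finite I\<close>)
  have indep_exp: "indep_vars (\<lambda>_. borel) (\<lambda>i \<omega>. exp (l * Y i \<omega>)) I"
    using indep_vars_compose2[OF indep, of "\<lambda>i x. exp (l * x)" "\<lambda>_. borel"] by simp
  have Y_integrable: "integrable M (Y i)" if "i \<in> I" for i
  proof (rule integrable_const_bound[where B=1])
    show "AE \<omega> in M. norm (Y i \<omega>) \<le> 1"
      using zero_one[OF that] by (intro AE_I2) fastforce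
    show "Y i \<in> borel_measurable M"
      using indep that unfolding indep_vars_def2 by auto
  qed
  have exp_affine: "AE \<omega> in M. exp (l * Y i \<omega>) = 1 + (exp l - 1) * Y i \<omega>" if "i \<in> I" for i
    using zero_one[OF that] by (intro AE_I2) fastforce
  have exp_integrable: "integrable M (\<lambda>\<omega>. exp (l * Y i \<omega>))" if "i \<in> I" for i
    using integrable_cong_AE_imp[OF _ _ AE_symmetric[OF exp_affine[OF that]]] Y_integrable[OF that]
    by (simp add: indep_vars_def2)
  show "integrable M (\<lambda>\<omega>. exp (l * (\<Sum>i\<in>I. Y i \<omega>)))"
    unfolding exp_sum by (rule indep_vars_integrable[OF \<open>finite I\<close> indep_exp exp_integrable])
  have "expectation (\<lambda>\<omega>. exp (l * Y i \<omega>)) = 1 + q * (exp l - 1)" if "i \<in> I" for i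
    using integral_cong_AE[OF _ _ exp_affine[OF that]] Y_integrable[OF that] mean[OF that]
    by (simp add: algebra_simps prob_space)
  then show "expectation (\<lambda>\<omega>. exp (l * (\<Sum>i\<in>I. Y i \<omega>))) = (1 + q * (exp l - 1)) ^ card I"
    unfolding exp_sum using indep_vars_lebesgue_integral[OF \<open>finite I\<close> indep_exp] exp_integrable
    by simp
qed

lemma bernoulli_sum_exp_tail:
  fixes Y :: "'i \<Rightarrow> 'a \<Rightarrow> real" and q :: real
  assumes "finite I" and "indep_vars (\<lambda>_. borel) Y I"
    and "\<And>i \<omega>. i \<in> I \<Longrightarrow> \<omega> \<in> space M \<Longrightarrow> Y i \<omega> \<in> {0, 1}"
    and "\<And>i. i \<in> I \<Longrightarrow> expectation (Y i) = q"
    and "0 \<le> q" "q \<le> 1"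
  shows "prob {\<omega> \<in> space M. a \<le> l * (\<Sum>i\<in>I. Y i \<omega>)} \<le> exp (card I * q * (exp l - 1) - a)"
proof -
  note mgf = expectation_exp_bernoulli_sum[OF assms(1-4), of l]
  have "prob {\<omega> \<in> space M. a \<le> l * (\<Sum>i\<in>I. Y i \<omega>)}
      = prob {\<omega> \<in> space M. exp a \<le> exp (l * (\<Sum>i\<in>I. Y i \<omega>))}"
    by simp
  also have "\<dots> \<le> expectation (\<lambda>\<omega>. exp (l * (\<Sum>i\<in>I. Y i \<omega>))) / exp a"
    by (rule integral_Markov_inequality_measure[OF mgf(1), where A = "space M"]) auto
  also have "\<dots> = (1 + q * (exp l - 1)) ^ card I / exp a"
    using mgf(2) by simp
  also have "\<dots> \<le> exp (q * (exp l - 1)) ^ card I / exp a"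
  proof (intro divide_right_mono power_mono exp_ge_add_one_self)
    have "0 \<le> (1 - q) + q * exp l"
      using assms(5,6) by (intro add_nonneg_nonneg) auto
    then show "0 \<le> 1 + q * (exp l - 1)"
      by (simp add: algebra_simps)
  qed simp
  also have "\<dots> = exp (card I * q * (exp l - 1) - a)"
    by (simp add: exp_diff exp_of_nat_mult[symmetric] mult.assoc)
  finally show ?thesis .
qed

text \<open>Both tails are estimated by the exponential Markov inequality with parameter \<open>\<plusminus>t/2\<close>.\<close>

lemma chernoff_bernoulli_sum:
  fixes Y :: "'i \<Rightarrow> 'a \<Rightarrow> real" and q :: real
  assumes "finite I" and "indep_vars (\<lambda>_. borel) Y I"
    and "\<And>i \<omega>. i \<in> I \<Longrightarrow> \<omega> \<in> space M \<Longrightarrow> Y i \<omega> \<in> {0, 1}"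
    and "\<And>i. i \<in> I \<Longrightarrow> expectation (Y i) = q"
    and q: "0 \<le> q" "q \<le> 1" and t: "0 < t" "t \<le> 1"
  shows "prob {\<omega> \<in> space M. t * (card I * q) < \<bar>(\<Sum>i\<in>I. Y i \<omega>) - card I * q\<bar>}
      \<le> 2 * exp (- (card I * q * t\<^sup>2 / 4))"
proof -
  define \<mu> where "\<mu> = card I * q"
  define S where "S = (\<lambda>\<omega>. \<Sum>i\<in>I. Y i \<omega>)"
  define l where "l = t / 2"
  have \<mu>: "0 \<le> \<mu>" and l: "0 < l" "l \<le> 1"
    using q t by (auto simp: \<mu>_def l_def)
  have S_measurable[measurable]: "S \<in> borel_measurable M"
    using assms(2) unfolding S_def indep_vars_def2 by (intro borel_measurable_sum) auto
  note tail = bernoulli_sum_exp_tail[OF assms(1-4) q, folded \<mu>_def]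
  have upper: "prob {\<omega> \<in> space M. (1 + t) * \<mu> \<le> S \<omega>} \<le> exp (- (\<mu> * t\<^sup>2 / 4))"
  proof -
    have "\<mu> * (exp l - 1) \<le> \<mu> * (l + l\<^sup>2)"
      using exp_bound[of l] l \<mu> by (intro mult_left_mono) auto
    then have "\<mu> * (exp l - 1) - l * ((1 + t) * \<mu>) \<le> - (\<mu> * t\<^sup>2 / 4)"
      by (simp add: l_def power2_eq_square field_simps)
    then show ?thesis
      using order_trans[OF tail[of "l * ((1 + t) * \<mu>)" l]] l unfolding S_def by simp
  qed
  have lower: "prob {\<omega> \<in> space M. S \<omega> \<le> (1 - t) * \<mu>} \<le> exp (- (\<mu> * t\<^sup>2 / 4))"
  proof -
    have "\<mu> * (exp (- l) - 1) \<le> \<mu> * (- l + l\<^sup>2)"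
      using exp_minus_le_quadratic[of l] l \<mu> by (intro mult_left_mono) auto
    then have "\<mu> * (exp (- l) - 1) - (- l) * ((1 - t) * \<mu>) \<le> - (\<mu> * t\<^sup>2 / 4)"
      by (simp add: l_def power2_eq_square field_simps)
    then show ?thesis
      using order_trans[OF tail[of "(- l) * ((1 - t) * \<mu>)" "- l"]] l unfolding S_def by simp
  qed
  have "{\<omega> \<in> space M. t * \<mu> < \<bar>S \<omega> - \<mu>\<bar>}
      \<subseteq> {\<omega> \<in> space M. (1 + t) * \<mu> \<le> S \<omega>} \<union> {\<omega> \<in> space M. S \<omega> \<le> (1 - t) * \<mu>}"
    by (auto simp: algebra_simps abs_if)
  then have "prob {\<omega> \<in> space M. t * \<mu> < \<bar>S \<omega> - \<mu>\<bar>}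
      \<le> prob {\<omega> \<in> space M. (1 + t) * \<mu> \<le> S \<omega>} + prob {\<omega> \<in> space M. S \<omega> \<le> (1 - t) * \<mu>}"
    by (intro order_trans[OF finite_measure_mono measure_Un_le]) auto
  then show ?thesis
    using upper lower unfolding \<mu>_def S_def by simp
qed

lemma chernoff_empirical_count:
  fixes X :: "'i \<Rightarrow> 'a \<Rightarrow> 'b" and q :: real
  assumes "finite I" and "I \<noteq> {}" and indep: "indep_vars (\<lambda>_. N) X I" and "C \<in> sets N"
    and prob_C: "\<And>i. i \<in> I \<Longrightarrow> prob {\<omega> \<in> space M. X i \<omega> \<in> C} = q"
    and "0 < t" "t \<le> 1"
  shows "prob {\<omega> \<in> space M. t * (card I * q) < \<bar>real (card {i \<in> I. X i \<omega> \<in> C}) - card I * q\<bar>}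
      \<le> 2 * exp (- (card I * q * t\<^sup>2 / 4))"
proof -
  have "indep_vars (\<lambda>_. borel) (\<lambda>i \<omega>. indicator C (X i \<omega>) :: real) I"
    using indep_vars_compose2[OF indep, of "\<lambda>_. indicator C" "\<lambda>_. borel"] assms(4) by simp
  moreover have "expectation (\<lambda>\<omega>. indicator C (X i \<omega>) :: real) = q" if "i \<in> I" for i
  proof -
    have "expectation (\<lambda>\<omega>. indicator C (X i \<omega>) :: real) = expectation (indicator (X i -` C \<inter> space M))"
      by (rule Bochner_Integration.integral_cong) (auto simp: indicator_def)
    then show ?thesis
      using prob_C[OF that] by (simp add: vimage_def Int_def conj_commute)
  qed
  moreover obtain i where "i \<in> I"
    using assms(2) by blast
  then have "0 \<le> q" "q \<le> 1"
    using prob_C[of i] by (auto simp: prob_le_1)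
  ultimately have "prob {\<omega> \<in> space M. t * (card I * q) < \<bar>(\<Sum>i\<in>I. indicator C (X i \<omega>)) - card I * q\<bar>}
      \<le> 2 * exp (- (card I * q * t\<^sup>2 / 4))"
    using assms(1,6,7) by (intro chernoff_bernoulli_sum) (auto simp: indicator_def)
  then show ?thesis
    using assms(1) by (simp add: sum_indicator_eq_card_image)
qed

end

section \<open>The grid partition\<close>

lemma cell_index_measurable [measurable]: "cell_index m \<in> borel \<rightarrow>\<^sub>M count_space UNIV"
  unfolding cell_index_def by measurable

lemma cell_index_less: "1 \<le> m \<Longrightarrow> cell_index m t < m"
  unfolding cell_index_def by auto

lemma grid_cell_borel [measurable]: "grid_cell m x \<in> sets borel"
proof -
  have "Measurable.pred borel (\<lambda>y. y \<in> unit_cube \<and> (\<forall>j. cell_index m (y $ j) = cell_index m (x $ j)))"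
    unfolding unit_cube_def by measurable
  then show ?thesis
    unfolding grid_cell_def by (simp add: pred_def)
qed

lemma grid_cells_finite_card:
  assumes "1 \<le> m"
  shows "finite (grid_cell m ` unit_cube :: (real ^ 'p) set set)"
    and "card (grid_cell m ` unit_cube :: (real ^ 'p) set set) \<le> m ^ CARD('p)"
proof -
  define K where "K = PiE (UNIV :: 'p set) (\<lambda>_. {..<m})"
  define G where "G = (\<lambda>k. {y :: real ^ 'p. y \<in> unit_cube \<and> (\<forall>j. cell_index m (y $ j) = k j)})"
  have cells_subset: "grid_cell m ` unit_cube \<subseteq> G ` K"
  proof
    fix C :: "(real ^ 'p) set"
    assume "C \<in> grid_cell m ` unit_cube"
    then obtain x where "C = grid_cell m x" by auto
    then have "C = G (\<lambda>j. cell_index m (x $ j))"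
      unfolding G_def grid_cell_def by auto
    moreover have "(\<lambda>j. cell_index m (x $ j)) \<in> K"
      unfolding K_def using cell_index_less[OF assms] by auto
    ultimately show "C \<in> G ` K" by blast
  qed
  have "finite K"
    unfolding K_def by (simp add: finite_PiE)
  then show "finite (grid_cell m ` unit_cube :: (real ^ 'p) set set)"
    using cells_subset finite_subset by blast
  have "card (grid_cell m ` unit_cube :: (real ^ 'p) set set) \<le> card (G ` K)"
    using cells_subset \<open>finite K\<close> by (simp add: card_mono)
  also have "\<dots> \<le> card K"
    using \<open>finite K\<close> by (rule card_image_le)
  also have "\<dots> = m ^ CARD('p)"
    unfolding K_def by (simp add: card_PiE)
  finally show "card (grid_cell m ` unit_cube :: (real ^ 'p) set set) \<le> m ^ CARD('p)" .
qed

lemma emeasure_lborel_box_cube: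
  fixes a :: "'a::euclidean_space"
  assumes "0 \<le> c"
  shows "emeasure lborel (box a (a + c *\<^sub>R One)) = ennreal (c ^ DIM('a))"
proof -
  have "(a + c *\<^sub>R One) \<bullet> b = a \<bullet> b + c" if "b \<in> Basis" for b
    using inner_sum_Basis[OF that] by (simp add: inner_add_left inner_commute[of One])
  then show ?thesis
    using assms by (subst emeasure_lborel_box) (auto simp: inner_diff_left)
qed

(* The simp normal form of (One :: real ^ 'n) $ j = 1. *)
lemma sum_Basis_vec_nth [simp]: "(\<Sum>b\<in>(Basis :: (real ^ 'n) set). b $ j) = 1"
proof -
  have "(One :: real ^ 'n) $ j = 1"
    by (metis cart_eq_inner_axis inner_commute inner_sum_Basis axis_in_Basis_iff Basis_real_def insertI1)
  then show ?thesis
    by (simp only: sum_component)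
qed

lemma box_subset_grid_cell:
  fixes x :: "real ^ 'p"
  assumes "1 \<le> m"
  defines "a \<equiv> \<chi> j. real (cell_index m (x $ j)) / m"
  shows "box a (a + (1 / m) *\<^sub>R One) \<subseteq> grid_cell m x"
proof
  fix y assume "y \<in> box a (a + (1 / m) *\<^sub>R One)"
  then have y: "real (cell_index m (x $ j)) < y $ j * m \<and> y $ j * m < real (cell_index m (x $ j)) + 1" for j
    using assms(1) by (auto simp: mem_box_cart a_def field_simps)
  have "\<lfloor>y $ j * m\<rfloor> = int (cell_index m (x $ j))" for j
    using y[of j] by (intro floor_unique) auto
  then have "cell_index m (y $ j) = cell_index m (x $ j)" for j
    using cell_index_less[OF assms(1), of "x $ j"] by (simp add: cell_index_def)
  moreover have "0 \<le> y $ j \<and> y $ j \<le> 1" for j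
  proof -
    have "0 \<le> y $ j * m" and "y $ j * m \<le> m"
      using y[of j] cell_index_less[OF assms(1), of "x $ j"] by linarith+
    then show ?thesis
      using assms(1) by (simp add: zero_le_mult_iff)
  qed
  ultimately show "y \<in> grid_cell m x"
    unfolding grid_cell_def unit_cube_def by auto
qed

lemma less_SUP_finite_imageE:
  fixes g :: "'b \<Rightarrow> 'c::conditionally_complete_linorder"
  assumes "finite (f ` A)" and "A \<noteq> {}" and "t < (SUP x\<in>A. g (f x))"
  obtains x where "x \<in> A" and "t < g (f x)"
proof -
  have "bdd_above ((\<lambda>x. g (f x)) ` A)"
    using assms(1) finite_imageI[of "f ` A" g] by (simp add: image_image)
  then have "\<exists>x\<in>A. t < g (f x)"
    using assms(3) by (simp add: less_cSUP_iff[OF assms(2)])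
  with that show ?thesis by blast
qed

lemma sup_relative_deviation_gtE:
  fixes N q :: "(real ^ 'p) set \<Rightarrow> real"
  assumes "1 \<le> m" and "0 < n"
    and q_pos: "\<And>x. x \<in> unit_cube \<Longrightarrow> 0 < q (grid_cell m x)"
    and "t < (SUP x\<in>unit_cube. \<bar>1 / real n * N (grid_cell m x) / q (grid_cell m x) - 1\<bar>)"
  obtains x where "x \<in> unit_cube"
    and "t * (n * q (grid_cell m x)) < \<bar>N (grid_cell m x) - n * q (grid_cell m x)\<bar>"
proof -
  have "finite (grid_cell m ` (unit_cube :: (real ^ 'p) set))"
    using grid_cells_finite_card(1)[OF assms(1)] .
  moreover have "(unit_cube :: (real ^ 'p) set) \<noteq> {}"
    unfolding unit_cube_def by (auto intro!: exI[of _ 0])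
  ultimately obtain x :: "real ^ 'p" where x: "x \<in> unit_cube"
    and "t < \<bar>1 / real n * N (grid_cell m x) / q (grid_cell m x) - 1\<bar>"
    using assms(4) by (rule less_SUP_finite_imageE[where g = "\<lambda>C. \<bar>1 / real n * N C / q C - 1\<bar>"])
  moreover have "1 / real n * N (grid_cell m x) / q (grid_cell m x) - 1
      = (N (grid_cell m x) - n * q (grid_cell m x)) / (n * q (grid_cell m x))"
    using q_pos[OF x] \<open>0 < n\<close> by (simp add: diff_divide_distrib)
  ultimately show ?thesis
    using that q_pos[OF x] \<open>0 < n\<close> by (simp add: abs_divide pos_less_divide_eq)
qed

section \<open>Relative deviations of the cell frequencies\<close>

lemma distributed_emeasure_ge:
  assumes "distributed M lborel X (\<lambda>x. ennreal (f x))" and "A \<in> sets borel"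
    and "\<And>x. x \<in> A \<Longrightarrow> c \<le> f x"
  shows "ennreal c * emeasure lborel A \<le> emeasure M (X -` A \<inter> space M)"
proof -
  have "ennreal c * emeasure lborel A = (\<integral>\<^sup>+ x. ennreal c * indicator A x \<partial>lborel)"
    using assms(2) by (simp add: nn_integral_cmult_indicator)
  also have "\<dots> \<le> (\<integral>\<^sup>+ x. ennreal (f x) * indicator A x \<partial>lborel)"
    using assms(3) by (intro nn_integral_mono) (auto simp: ennreal_leI split: split_indicator)
  also have "\<dots> = emeasure M (X -` A \<inter> space M)"
    using distributed_emeasure[OF assms(1)] assms(2) by simp
  finally show ?thesis .
qed

context prob_space
begin

lemma prob_distributed_eq:
  assumes "distributed M N X f" and "distributed M N Y f" and "A \<in> sets N"
  shows "prob {\<omega> \<in> space M. X \<omega> \<in> A} = prob {\<omega> \<in> space M. Y \<omega> \<in> A}"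
  using distributed_emeasure[OF assms(1,3)] distributed_emeasure[OF assms(2,3)]
  by (simp add: measure_def vimage_def Int_def conj_commute)

lemma prob_grid_cell_ge:
  fixes X :: "'a \<Rightarrow> real ^ 'p"
  assumes "distributed M lborel X (\<lambda>x. ennreal (f x))"
    and "\<And>x. x \<in> unit_cube \<Longrightarrow> c \<le> f x" and "0 \<le> c" and "1 \<le> m"
  shows "c * (1 / real m) ^ CARD('p) \<le> prob {\<omega> \<in> space M. X \<omega> \<in> grid_cell m x}"
proof -
  define a :: "real ^ 'p" where "a = (\<chi> j. real (cell_index m (x $ j)) / m)"
  define B where "B = box a (a + (1 / m) *\<^sub>R One)"
  have "B \<subseteq> grid_cell m x"
    unfolding B_def a_def by (rule box_subset_grid_cell[OF assms(4)])
  moreover have "grid_cell m x \<subseteq> unit_cube"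
    unfolding grid_cell_def by auto
  ultimately have "ennreal c * emeasure lborel B \<le> emeasure M (X -` B \<inter> space M)"
    using assms(2) by (intro distributed_emeasure_ge[OF assms(1)]) (auto simp: B_def)
  also have "\<dots> \<le> emeasure M (X -` grid_cell m x \<inter> space M)"
    using \<open>B \<subseteq> grid_cell m x\<close> distributed_measurable[OF assms(1)]
    by (intro emeasure_mono) auto
  finally have "ennreal (c * (1 / real m) ^ CARD('p)) \<le> ennreal (prob (X -` grid_cell m x \<inter> space M))"
    using assms(3) emeasure_lborel_box_cube[of "1 / real m" a]
    by (simp add: B_def emeasure_eq_measure ennreal_mult)
  then show ?thesis
    by (simp add: ennreal_le_iff vimage_def Int_def conj_commute)
qed

lemma prob_grid_cell_count_deviation_le:
  fixes X :: "nat \<Rightarrow> 'a \<Rightarrow> real ^ 'p" and f :: "real ^ 'p \<Rightarrow> real" and x :: "real ^ 'p"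
  assumes indep: "indep_vars (\<lambda>_. borel) X {1..n}"
    and distr: "\<And>i. i \<in> {1..n} \<Longrightarrow> distributed M lborel (X i) (\<lambda>x. ennreal (f x))"
    and f_ge: "\<And>x. x \<in> unit_cube \<Longrightarrow> c \<le> f x" and "0 \<le> c"
    and "1 \<le> m" and "1 \<le> n" and "0 < t" and "t \<le> 1"
  defines "q \<equiv> prob {\<omega> \<in> space M. X 1 \<omega> \<in> grid_cell m x}"
  shows "prob {\<omega> \<in> space M. t * (n * q) < \<bar>real (card {i \<in> {1..n}. X i \<omega> \<in> grid_cell m x}) - n * q\<bar>}
      \<le> 2 * exp (- (real n * c * (1 / real m) ^ CARD('p) * t\<^sup>2 / 4))"
proof -
  have one_in: "1 \<in> {1..n}"
    using \<open>1 \<le> n\<close> by simp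
  have "prob {\<omega> \<in> space M. t * (card {1..n} * q)
        < \<bar>real (card {i \<in> {1..n}. X i \<omega> \<in> grid_cell m x}) - card {1..n} * q\<bar>}
      \<le> 2 * exp (- (card {1..n} * q * t\<^sup>2 / 4))"
  proof (rule chernoff_empirical_count[OF _ _ indep grid_cell_borel])
    show "prob {\<omega> \<in> space M. X i \<omega> \<in> grid_cell m x} = q" if "i \<in> {1..n}" for i
      unfolding q_def by (intro prob_distributed_eq[OF distr[OF that] distr[OF one_in]]) simp
  qed (use \<open>1 \<le> n\<close> \<open>0 < t\<close> \<open>t \<le> 1\<close> in auto)
  then have chernoff: "prob {\<omega> \<in> space M. t * (n * q)
        < \<bar>real (card {i \<in> {1..n}. X i \<omega> \<in> grid_cell m x}) - n * q\<bar>}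
      \<le> 2 * exp (- (n * q * t\<^sup>2 / 4))"
    by simp
  have "real n * c * (1 / real m) ^ CARD('p) * t\<^sup>2 \<le> real n * q * t\<^sup>2"
    using prob_grid_cell_ge[OF distr[OF one_in] f_ge \<open>0 \<le> c\<close> \<open>1 \<le> m\<close>, of x]
    unfolding q_def by (intro mult_right_mono) (auto simp: mult.assoc intro: mult_left_mono)
  then have "exp (- (real n * q * t\<^sup>2 / 4)) \<le> exp (- (real n * c * (1 / real m) ^ CARD('p) * t\<^sup>2 / 4))"
    by (subst exp_le_cancel_iff) linarith
  with chernoff show ?thesis
    by linarith
qed

lemma prob_UN_grid_cells_le:
  fixes A :: "(real ^ 'p) set \<Rightarrow> 'a set"
  assumes "1 \<le> m" and A_sets: "\<And>x. A (grid_cell m x) \<in> events"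
    and A_prob: "\<And>x. prob (A (grid_cell m x)) \<le> b"
  shows "(\<Union>x\<in>unit_cube. A (grid_cell m x)) \<in> events"
    and "prob (\<Union>x\<in>unit_cube. A (grid_cell m x)) \<le> real m ^ CARD('p) * b"
proof -
  define cells where "cells = grid_cell m ` (unit_cube :: (real ^ 'p) set)"
  have "finite cells" and card_cells: "card cells \<le> m ^ CARD('p)"
    unfolding cells_def using grid_cells_finite_card[OF assms(1)] by simp_all
  have UN_cells: "(\<Union>x\<in>unit_cube. A (grid_cell m x)) = (\<Union>C\<in>cells. A C)"
    unfolding cells_def by blast
  show "(\<Union>x\<in>unit_cube. A (grid_cell m x)) \<in> events"
    unfolding UN_cells using \<open>finite cells\<close> A_sets by (intro sets.finite_UN) (auto simp: cells_def)
  have "prob (\<Union>C\<in>cells. A C) \<le> (\<Sum>C\<in>cells. prob (A C))"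
    using \<open>finite cells\<close> A_sets by (intro measure_UNION_le) (auto simp: cells_def)
  also have "\<dots> \<le> real (card cells) * b"
    using A_prob by (intro sum_bounded_above) (auto simp: cells_def)
  also have "\<dots> \<le> real m ^ CARD('p) * b"
    using card_cells order_trans[OF measure_nonneg A_prob]
    by (intro mult_right_mono) (simp_all flip: of_nat_power)
  finally show "prob (\<Union>x\<in>unit_cube. A (grid_cell m x)) \<le> real m ^ CARD('p) * b"
    unfolding UN_cells .
qed

lemma prob_sup_relative_cell_deviation_le:
  fixes X :: "nat \<Rightarrow> 'a \<Rightarrow> real ^ 'p" and f :: "real ^ 'p \<Rightarrow> real"
  assumes indep: "indep_vars (\<lambda>_. borel) X {1..n}"
    and distr: "\<And>i. i \<in> {1..n} \<Longrightarrow> distributed M lborel (X i) (\<lambda>x. ennreal (f x))"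
    and f_ge: "\<And>x. x \<in> unit_cube \<Longrightarrow> c \<le> f x" and "0 < c"
    and "1 \<le> m" and "1 \<le> n" and "0 < t" and "t \<le> 1"
  shows "prob {\<omega> \<in> space M. t < (SUP x\<in>unit_cube.
            \<bar>1 / real n * real (card {i \<in> {1..n}. X i \<omega> \<in> grid_cell m x})
               / prob {\<omega>' \<in> space M. X 1 \<omega>' \<in> grid_cell m x} - 1\<bar>)}
      \<le> real m ^ CARD('p) * (2 * exp (- (real n * c * (1 / real m) ^ CARD('p) * t\<^sup>2 / 4)))"
    (is "prob ?event \<le> _")
proof -
  define q where "q C = prob {\<omega> \<in> space M. X 1 \<omega> \<in> C}" for C
  define count where "count \<omega> C = real (card {i \<in> {1..n}. X i \<omega> \<in> C})" for \<omega> C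
  define E where "E C = {\<omega> \<in> space M. t * (n * q C) < \<bar>count \<omega> C - n * q C\<bar>}" for C
  have q_pos: "0 < q (grid_cell m x)" for x
  proof -
    have "0 < c * (1 / real m) ^ CARD('p)"
      using \<open>0 < c\<close> \<open>1 \<le> m\<close> by simp
    also have "\<dots> \<le> q (grid_cell m x)"
      unfolding q_def using \<open>0 < c\<close> \<open>1 \<le> m\<close> \<open>1 \<le> n\<close>
      by (intro prob_grid_cell_ge[OF distr f_ge]) auto
    finally show ?thesis .
  qed
  have E_sets: "E (grid_cell m x) \<in> events" for x
  proof -
    have [measurable]: "(\<lambda>\<omega>. count \<omega> (grid_cell m x)) \<in> borel_measurable M"
      unfolding count_def using indep
      by (intro borel_measurable_card_mem) (auto simp: indep_vars_def2)
    show ?thesis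
      unfolding E_def by measurable
  qed
  have event_subset: "?event \<subseteq> (\<Union>x\<in>unit_cube. E (grid_cell m x))"
  proof
    fix \<omega> assume "\<omega> \<in> ?event"
    then have "\<omega> \<in> space M"
      and sup: "t < (SUP x\<in>unit_cube. \<bar>1 / real n * count \<omega> (grid_cell m x) / q (grid_cell m x) - 1\<bar>)"
      unfolding count_def q_def by auto
    obtain x where "x \<in> unit_cube"
      and "t * (n * q (grid_cell m x)) < \<bar>count \<omega> (grid_cell m x) - n * q (grid_cell m x)\<bar>"
      by (rule sup_relative_deviation_gtE[where N = "count \<omega>" and q = q and m = m and n = n and t = t])
        (use q_pos \<open>1 \<le> m\<close> \<open>1 \<le> n\<close> sup in auto)
    with \<open>\<omega> \<in> space M\<close> show "\<omega> \<in> (\<Union>x\<in>unit_cube. E (grid_cell m x))"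
      unfolding E_def by blast
  qed
  have E_prob: "prob (E (grid_cell m x))
      \<le> 2 * exp (- (real n * c * (1 / real m) ^ CARD('p) * t\<^sup>2 / 4))" for x
    unfolding E_def count_def q_def using \<open>0 < c\<close>
    by (intro prob_grid_cell_count_deviation_le[OF indep distr f_ge _ \<open>1 \<le> m\<close> \<open>1 \<le> n\<close> \<open>0 < t\<close> \<open>t \<le> 1\<close>]) simp_all
  note UN_bound = prob_UN_grid_cells_le[where A = E, OF \<open>1 \<le> m\<close> E_sets E_prob]
  have "prob ?event \<le> prob (\<Union>x\<in>unit_cube. E (grid_cell m x))"
    using event_subset UN_bound(1) by (rule finite_measure_mono)
  also have "\<dots> \<le> real m ^ CARD('p) * (2 * exp (- (real n * c * (1 / real m) ^ CARD('p) * t\<^sup>2 / 4)))"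
    by (rule UN_bound(2))
  finally show ?thesis .
qed

end

section \<open>Asymptotics\<close>

lemma eventually_ln_power_mult_le:
  fixes m :: "nat \<Rightarrow> nat" and r :: real
  assumes "(\<lambda>n. ln (real n) ^ k / ((1 / real (m n)) ^ p * real n powr r)) \<longlonglongrightarrow> 0"
    and "r \<le> 1" and "\<And>n. 1 \<le> m n"
  shows "\<forall>\<^sub>F n in sequentially. ln (real n) ^ k * real (m n) ^ p \<le> real n"
  using order_tendstoD(2)[OF assms(1) zero_less_one] eventually_ge_at_top[of 1]
proof eventually_elim
  case (elim n)
  define w where "w = (1 / real (m n)) ^ p"
  have w: "0 < w" "w * real (m n) ^ p = 1"
    using assms(3)[of n] by (simp_all add: w_def power_one_over)
  have "ln (real n) ^ k < w * real n powr r"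
    using elim w(1) by (simp add: w_def divide_less_eq)
  also have "\<dots> \<le> w * real n"
    using powr_mono[OF assms(2), of "real n"] elim w(1) by simp
  finally have "ln (real n) ^ k * real (m n) ^ p < w * real (m n) ^ p * real n"
    using assms(3)[of n] by (simp add: mult.commute mult.left_commute)
  then show ?case
    using w(2) by simp
qed

lemma grid_union_bound_le:
  fixes L c \<epsilon> :: real
  assumes "1 \<le> L" and "L ^ 5 * real m ^ p \<le> real n" and "1 \<le> m" and "0 \<le> c"
  shows "real m ^ p * (2 * exp (- (real n * c * (1 / real m) ^ p * (\<epsilon> / L powr (3 / 2))\<^sup>2 / 4)))
      \<le> real n * (2 * exp (- (c * \<epsilon>\<^sup>2 / 4 * L\<^sup>2)))"
proof -
  have "1 * real m ^ p \<le> L ^ 5 * real m ^ p"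
    using assms(1) by (intro mult_right_mono one_le_power) auto
  then have "real m ^ p \<le> real n"
    using assms(2) by linarith
  moreover have "c * \<epsilon>\<^sup>2 / 4 * L\<^sup>2 \<le> real n * c * (1 / real m) ^ p * (\<epsilon> / L powr (3 / 2))\<^sup>2 / 4"
  proof -
    have "(L powr (3 / 2))\<^sup>2 = L powr 3"
      by (simp add: power2_eq_square powr_add[symmetric])
    then have sq: "(\<epsilon> / L powr (3 / 2))\<^sup>2 = \<epsilon>\<^sup>2 / L ^ 3"
      using assms(1) by (simp add: power_divide powr_numeral)
    have "c * \<epsilon>\<^sup>2 / 4 * L\<^sup>2 = c * \<epsilon>\<^sup>2 / 4 / L ^ 3 * L ^ 5"
      using assms(1) by (simp add: field_simps power_add[symmetric])
    also have "\<dots> \<le> c * \<epsilon>\<^sup>2 / 4 / L ^ 3 * (real n * (1 / real m) ^ p)"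
      using assms by (intro mult_left_mono) (simp_all add: power_one_over pos_le_divide_eq)
    also have "\<dots> = real n * c * (1 / real m) ^ p * (\<epsilon> / L powr (3 / 2))\<^sup>2 / 4"
      unfolding sq by (simp add: field_simps)
    finally show ?thesis .
  qed
  ultimately show ?thesis
    by (intro mult_mono) auto
qed

context prob_space
begin

lemma prob_scaled_sup_relative_cell_deviation_le:
  fixes X :: "nat \<Rightarrow> 'a \<Rightarrow> real ^ 'p" and f :: "real ^ 'p \<Rightarrow> real"
  assumes indep: "indep_vars (\<lambda>_. borel) X {1..n}"
    and distr: "\<And>i. i \<in> {1..n} \<Longrightarrow> distributed M lborel (X i) (\<lambda>x. ennreal (f x))"
    and f_ge: "\<And>x. x \<in> unit_cube \<Longrightarrow> c \<le> f x" and "0 < c" and "1 \<le> m" and "0 < \<epsilon>"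
    and ln_n: "1 \<le> ln (real n)" "\<epsilon> < ln (real n) powr (3 / 2)"
      "ln (real n) ^ 5 * real m ^ CARD('p) \<le> real n"
  shows "prob {\<omega> \<in> space M. (SUP x\<in>unit_cube.
            \<bar>1 / real n * real (card {i \<in> {1..n}. X i \<omega> \<in> grid_cell m x})
               / prob {\<omega>' \<in> space M. X 1 \<omega>' \<in> grid_cell m x} - 1\<bar>)
            * ln (real n) powr (3 / 2) > \<epsilon>}
      \<le> real n * (2 * exp (- (c * \<epsilon>\<^sup>2 / 4 * (ln (real n))\<^sup>2)))"
proof -
  define L where "L = ln (real n) powr (3 / 2)"
  have "0 < L" and "\<epsilon> / L \<le> 1"
    using ln_n \<open>0 < \<epsilon>\<close> by (auto simp: L_def)
  have "1 \<le> n"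
    using ln_n(1) by (cases "n = 0") auto
  have "prob {\<omega> \<in> space M. (SUP x\<in>unit_cube.
            \<bar>1 / real n * real (card {i \<in> {1..n}. X i \<omega> \<in> grid_cell m x})
               / prob {\<omega>' \<in> space M. X 1 \<omega>' \<in> grid_cell m x} - 1\<bar>) * L > \<epsilon>}
      \<le> real m ^ CARD('p) * (2 * exp (- (real n * c * (1 / real m) ^ CARD('p) * (\<epsilon> / L)\<^sup>2 / 4)))"
    using prob_sup_relative_cell_deviation_le[OF indep distr f_ge \<open>0 < c\<close> \<open>1 \<le> m\<close> \<open>1 \<le> n\<close>, of "\<epsilon> / L"]
      \<open>0 < L\<close> \<open>\<epsilon> / L \<le> 1\<close> \<open>0 < \<epsilon>\<close> by (simp add: pos_divide_less_eq)
  also have "\<dots> \<le> real n * (2 * exp (- (c * \<epsilon>\<^sup>2 / 4 * (ln (real n))\<^sup>2)))"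
    unfolding L_def using ln_n \<open>1 \<le> m\<close> \<open>0 < c\<close> by (intro grid_union_bound_le) auto
  finally show ?thesis
    unfolding L_def .
qed

lemma tendsto_prob_scaled_sup_relative_cell_deviation:
  fixes X :: "nat \<Rightarrow> 'a \<Rightarrow> real ^ 'p" and f :: "real ^ 'p \<Rightarrow> real" and m :: "nat \<Rightarrow> nat"
  assumes indep: "indep_vars (\<lambda>_. borel) X UNIV"
    and distr: "\<And>i. distributed M lborel (X i) (\<lambda>x. ennreal (f x))"
    and f_ge: "\<And>x. x \<in> unit_cube \<Longrightarrow> c \<le> f x" and "0 < c" and "\<And>n. 1 \<le> m n" and "0 < \<epsilon>"
    and fine_grid: "\<forall>\<^sub>F n in sequentially. ln (real n) ^ 5 * real (m n) ^ CARD('p) \<le> real n"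
  shows "(\<lambda>n. prob {\<omega> \<in> space M. (SUP x\<in>unit_cube.
            \<bar>1 / real n * real (card {i \<in> {1..n}. X i \<omega> \<in> grid_cell (m n) x})
               / prob {\<omega>' \<in> space M. X 1 \<omega>' \<in> grid_cell (m n) x} - 1\<bar>)
            * ln (real n) powr (3 / 2) > \<epsilon>}) \<longlonglongrightarrow> 0"
    (is "(\<lambda>n. prob (?event n)) \<longlonglongrightarrow> 0")
proof (rule tendsto_sandwich[OF _ _ tendsto_const])
  show "\<forall>\<^sub>F n in sequentially. 0 \<le> prob (?event n)"
    by simp
  have "\<forall>\<^sub>F n in sequentially. 1 \<le> ln (real n)"
    by real_asymp
  moreover have "\<forall>\<^sub>F n in sequentially. \<epsilon> < ln (real n) powr (3 / 2)"
    by real_asymp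
  ultimately show "\<forall>\<^sub>F n in sequentially.
      prob (?event n) \<le> real n * (2 * exp (- (c * \<epsilon>\<^sup>2 / 4 * (ln (real n))\<^sup>2)))"
    using fine_grid
  proof eventually_elim
    case (elim n)
    show ?case
      using indep_vars_subset[OF indep] distr f_ge \<open>0 < c\<close> \<open>1 \<le> m n\<close> \<open>0 < \<epsilon>\<close> elim
      by (intro prob_scaled_sup_relative_cell_deviation_le[where f = f]) auto
  qed
  show "(\<lambda>n. real n * (2 * exp (- (c * \<epsilon>\<^sup>2 / 4 * (ln (real n))\<^sup>2)))) \<longlonglongrightarrow> 0"
    using \<open>0 < c\<close> \<open>0 < \<epsilon>\<close> by real_asymp
qed

end

theorem lemma2:
  fixes M :: "'a measure"
    and X :: "nat \<Rightarrow> 'a \<Rightarrow> real ^ 'p"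
    and fX :: "real ^ 'p \<Rightarrow> real"
    and cX CX :: real
    and m :: "nat \<Rightarrow> nat"
    and \<nu> :: nat
  assumes "prob_space M"
    and "prob_space.indep_vars M (\<lambda>_. borel) X UNIV"
    and "\<And>i. distributed M lborel (X i) (\<lambda>x. ennreal (fX x))"
    and "\<And>x. x \<notin> unit_cube \<Longrightarrow> fX x = 0"
    and "0 < cX"
    and "\<And>x. x \<in> unit_cube \<Longrightarrow> cX \<le> fX x \<and> fX x \<le> CX"
    and "\<And>n. m n \<ge> 1"
    and "\<nu> \<ge> 4"
    and "(\<lambda>n. (ln (real n)) ^ 5 / ((1 / real (m n)) ^ CARD('p) * real n powr (1 - 2 / real \<nu>)))
           \<longlonglongrightarrow> 0"
  shows "\<forall>\<epsilon>>0. (\<lambda>n. measure M {\<omega> \<in> space M.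
            (SUP x\<in>unit_cube.
               \<bar>((1 / real n) * real (card {i \<in> {1..n}. X i \<omega> \<in> grid_cell (m n) x}))
                  / measure M {\<omega>' \<in> space M. X 1 \<omega>' \<in> grid_cell (m n) x} - 1\<bar>)
            * (ln (real n)) powr (3 / 2) > \<epsilon>}) \<longlonglongrightarrow> 0"
proof (intro allI impI
    prob_space.tendsto_prob_scaled_sup_relative_cell_deviation[where c = cX, OF assms(1-3)])
  show "\<forall>\<^sub>F n in sequentially. ln (real n) ^ 5 * real (m n) ^ CARD('p) \<le> real n"
    by (rule eventually_ln_power_mult_le[OF assms(9) _ assms(7)]) simp
qed (use assms(5-7) in auto)

end
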